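(* Let $p\geq 5$ be a prime. Then \[h(-4p)\leq \frac{3\sqrt{p}}{2\pi}\bigl(\log p+5-2\log 6\bigr).\]
   Context: For a negative discriminant $D$, $h(D)$ denotes the class number of primitive positive definite binary quadratic forms of discriminant $D$. *)

theory Defs
  imports Complex_Main "HOL-Computational_Algebra.Primes"
begin

text \<open>Binary quadratic forms a x^2 + b x y + c y^2 are represented by triples (a,b,c).\<close>

type_synonym bqf = "int \<times> int \<times> int"

definition disc :: "bqf \<Rightarrow> int" where
  "disc f = (case f of (a, b, c) \<Rightarrow> b^2 - 4*a*c)"

text \<open>Primitive positive definite forms of discriminant D (for D < 0, positive
definiteness is equivalent to a > 0).\<close>
definition prim_pd_forms :: "int \<Rightarrow> bqf set" where
  "prim_pd_forms D = {(a, b, c). b^2 - 4*a*c = D \<and> D < 0 \<and> a > 0 \<and> gcd a (gcd b c) = 1}"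

text \<open>Action of the matrix (p q; r s): f(x,y) becomes f(p x + q y, r x + s y).\<close>
definition bqf_act :: "int \<Rightarrow> int \<Rightarrow> int \<Rightarrow> int \<Rightarrow> bqf \<Rightarrow> bqf" where
  "bqf_act p q r s f = (case f of (a, b, c) \<Rightarrow>
     (a*p^2 + b*p*r + c*r^2,
      2*a*p*q + b*(p*s + q*r) + 2*c*r*s,
      a*q^2 + b*q*s + c*s^2))"

definition bqf_equiv :: "bqf \<Rightarrow> bqf \<Rightarrow> bool" where
  "bqf_equiv f g \<longleftrightarrow> (\<exists>p q r s. p*s - q*r = 1 \<and> g = bqf_act p q r s f)"

definition class_number :: "int \<Rightarrow> nat" where
  "class_number D = card (prim_pd_forms D //
      {(f, g). f \<in> prim_pd_forms D \<and> g \<in> prim_pd_forms D \<and> bqf_equiv f g})"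

end

theory Submission
  imports Defs "HOL-Analysis.Harmonic_Numbers" "HOL-Analysis.Complex_Transcendental"
begin

text \<open>Every class of discriminant -4p contains a form (a, 2k, c) with -a < 2k \<le> a \<le> c; then
  ac = k^2 + p forces 3a^2 \<le> 4p, so h(-4p) is at most the number of pairs (a, k) with
  a \<le> X = floor (sqrt (4p/3)), k^2 = -p mod a and k in a window of length a.  Such a root k is
  determined by its residue modulo the 2-part of a (at most 1, 2 or 4 choices) and by the unitary
  divisor gcd(m, k - k0) of the odd part m of a, for a fixed root k0.  Summing over a \<le> X, the
  pairs (d, a/d) for odd unitary divisors d are lattice points under the hyperbola df \<le> X with d
  odd and 3 not dividing both coordinates; counting them with odd harmonic sums gives
  (2/3) X log X + O(X), which is below the claimed bound once X \<ge> 64.  The finitely many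
  X < 64 are settled by exact integer computation.\<close>

section \<open>Reduced forms\<close>

lemma bqf_act_act:
  "bqf_act p' q' r' s' (bqf_act p q r s f) =
     bqf_act (p * p' + q * r') (p * q' + q * s') (r * p' + s * r') (r * q' + s * s') f"
  by (cases f) (simp add: bqf_act_def power2_eq_square algebra_simps)

lemma bqf_act_id [simp]: "bqf_act 1 0 0 1 f = f"
  by (cases f) (simp add: bqf_act_def)

lemma disc_bqf_act: "disc (bqf_act p q r s f) = (p * s - q * r)^2 * disc f"
  by (cases f) (simp add: bqf_act_def disc_def power2_eq_square algebra_simps)

lemma bqf_act_inverse:
  assumes "p * s - q * r = 1"
  shows "bqf_act s (-q) (-r) p (bqf_act p q r s f) = f"
proof -
  have "bqf_act s (-q) (-r) p (bqf_act p q r s f) = bqf_act (p * s - q * r) 0 0 (p * s - q * r) f"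
    by (simp add: bqf_act_act algebra_simps)
  with assms show ?thesis by simp
qed

lemma bqf_equiv_act: "p * s - q * r = 1 \<Longrightarrow> bqf_equiv f (bqf_act p q r s f)"
  unfolding bqf_equiv_def by blast

lemma bqf_equiv_refl: "bqf_equiv f f"
  using bqf_equiv_act[of 1 1 0 0 f] by simp

lemma bqf_equiv_sym:
  assumes "bqf_equiv f g"
  shows "bqf_equiv g f"
proof -
  obtain p q r s where det: "p * s - q * r = 1" and g: "g = bqf_act p q r s f"
    using assms unfolding bqf_equiv_def by blast
  have "s * p - (-q) * (-r) = 1" using det by (simp add: mult.commute)
  then show ?thesis using bqf_equiv_act bqf_act_inverse[OF det] g by metis
qed

lemma bqf_equiv_trans:
  assumes "bqf_equiv f g" "bqf_equiv g h"
  shows "bqf_equiv f h"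
proof -
  obtain p q r s where det: "p * s - q * r = 1" and g: "g = bqf_act p q r s f"
    using assms(1) unfolding bqf_equiv_def by blast
  obtain p' q' r' s' where det': "p' * s' - q' * r' = 1" and h: "h = bqf_act p' q' r' s' g"
    using assms(2) unfolding bqf_equiv_def by blast
  have "(p * p' + q * r') * (r * q' + s * s') - (p * q' + q * s') * (r * p' + s * r')
          = (p * s - q * r) * (p' * s' - q' * r')"
    by (simp add: algebra_simps)
  with det det' have "bqf_equiv f (bqf_act (p * p' + q * r') (p * q' + q * s')
                                    (r * p' + s * r') (r * q' + s * s') f)"
    by (intro bqf_equiv_act) simp
  then show ?thesis by (simp add: g h bqf_act_act)
qed

lemma prim_pd_forms_equiv:
  assumes f: "f \<in> prim_pd_forms D" and fg: "bqf_equiv f g" and pos: "0 < fst g"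
  shows "g \<in> prim_pd_forms D"
proof -
  obtain p q r s where det: "p * s - q * r = 1" and g: "g = bqf_act p q r s f"
    using fg unfolding bqf_equiv_def by blast
  obtain a b c a' b' c' where f_abc: "f = (a, b, c)" and g_abc: "g = (a', b', c')"
    by (cases f, cases g)
  have "disc g = disc f" using disc_bqf_act[of p q r s f] det g by simp
  moreover have "gcd a' (gcd b' c') = 1"
  proof -
    let ?d = "gcd a' (gcd b' c')"
    have "?d dvd a'" "?d dvd b'" "?d dvd c'" by (meson gcd_dvd1 gcd_dvd2 dvd_trans)+
    moreover have "(a, b, c) = bqf_act s (-q) (-r) p (a', b', c')"
      using bqf_act_inverse[OF det] f_abc g g_abc by simp
    ultimately have "?d dvd a" "?d dvd b" "?d dvd c"
      by (auto simp: bqf_act_def power2_eq_square)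
    then have "?d dvd gcd a (gcd b c)" by simp
    with f f_abc show ?thesis by (simp add: prim_pd_forms_def)
  qed
  ultimately show ?thesis using f pos f_abc g_abc by (simp add: prim_pd_forms_def disc_def)
qed

definition reduced_bqf :: "bqf \<Rightarrow> bool" where
  "reduced_bqf f \<longleftrightarrow> (case f of (a, b, c) \<Rightarrow> -a < b \<and> b \<le> a \<and> a \<le> c)"

lemma bqf_equiv_translate: "bqf_equiv (a, b, c) (a, 2 * a * t + b, a * t^2 + b * t + c)"
  using bqf_equiv_act[of 1 1 t 0 "(a, b, c)"]
  by (simp add: bqf_act_def power2_eq_square algebra_simps)

lemma bqf_equiv_swap: "bqf_equiv (a, b, c) (c, -b, a)"
  using bqf_equiv_act[of 0 0 "-1" 1 "(a, b, c)"] by (simp add: bqf_act_def)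

lemma ex_reduced_bqf_equiv:
  assumes "f \<in> prim_pd_forms D"
  shows "\<exists>g \<in> prim_pd_forms D. reduced_bqf g \<and> bqf_equiv f g"
  using assms
proof (induction "nat (fst f)" arbitrary: f rule: less_induct)
  case less
  obtain a b c where f: "f = (a, b, c)" by (cases f)
  have a: "0 < a" and D: "D < 0" using less.prems f by (auto simp: prim_pd_forms_def)
  define t where "t = (a - b) div (2 * a)"
  define b' c' where "b' = 2 * a * t + b" and "c' = a * t^2 + b * t + c"
  have equiv1: "bqf_equiv f (a, b', c')"
    unfolding f b'_def c'_def by (rule bqf_equiv_translate)
  have form1: "(a, b', c') \<in> prim_pd_forms D"
    using prim_pd_forms_equiv[OF less.prems equiv1] a by simp
  have b'_range: "-a < b'" "b' \<le> a"
  proof -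
    have "a - b = 2 * a * t + (a - b) mod (2 * a)" by (simp add: t_def)
    moreover have "0 \<le> (a - b) mod (2 * a)" "(a - b) mod (2 * a) < 2 * a" using a by auto
    ultimately show "-a < b'" "b' \<le> a" unfolding b'_def by linarith+
  qed
  show ?case
  proof (cases "a \<le> c'")
    case True
    with form1 equiv1 b'_range show ?thesis by (auto simp: reduced_bqf_def)
  next
    case False
    have "b'^2 - 4 * a * c' = D" using form1 by (simp add: prim_pd_forms_def)
    moreover have "0 \<le> b'^2" by simp
    ultimately have "0 < a * c'" using D by linarith
    with a have c': "0 < c'" by (simp add: zero_less_mult_iff)
    have equiv2: "bqf_equiv (a, b', c') (c', -b', a)" by (rule bqf_equiv_swap)
    have form2: "(c', -b', a) \<in> prim_pd_forms D"
      using prim_pd_forms_equiv[OF form1 equiv2] c' by simp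
    have "nat c' < nat (fst f)" using False c' f by simp
    with less.hyps form2 obtain g
      where "g \<in> prim_pd_forms D" "reduced_bqf g" "bqf_equiv (c', -b', a) g"
      by fastforce
    with equiv1 equiv2 show ?thesis by (meson bqf_equiv_trans)
  qed
qed

lemma class_number_le_card_reduced:
  assumes "finite {g \<in> prim_pd_forms D. reduced_bqf g}"
  shows "class_number D \<le> card {g \<in> prim_pd_forms D. reduced_bqf g}"
proof -
  define E where "E = {(f, g). f \<in> prim_pd_forms D \<and> g \<in> prim_pd_forms D \<and> bqf_equiv f g}"
  define R where "R = {g \<in> prim_pd_forms D. reduced_bqf g}"
  have equiv: "equiv (prim_pd_forms D) E"
    unfolding equiv_def refl_on_def sym_def trans_def E_def
    using bqf_equiv_refl bqf_equiv_sym bqf_equiv_trans by blast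
  have "prim_pd_forms D // E \<subseteq> (\<lambda>g. E `` {g}) ` R"
  proof
    fix C assume "C \<in> prim_pd_forms D // E"
    then obtain f where f: "f \<in> prim_pd_forms D" and C: "C = E `` {f}" by (auto elim: quotientE)
    obtain g where g: "g \<in> R" "bqf_equiv f g"
      using ex_reduced_bqf_equiv[OF f] unfolding R_def by blast
    then have "(f, g) \<in> E" using f by (simp add: E_def R_def)
    then have "C = E `` {g}" using C equiv_class_eq[OF equiv] by blast
    with g show "C \<in> (\<lambda>g. E `` {g}) ` R" by blast
  qed
  then have "card (prim_pd_forms D // E) \<le> card ((\<lambda>g. E `` {g}) ` R)"
    using assms by (intro card_mono) (auto simp: R_def)
  also have "\<dots> \<le> card R" using assms card_image_le unfolding R_def by blast
  finally show ?thesis by (simp add: class_number_def E_def R_def)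
qed

section \<open>Square roots of -p modulo a\<close>

definition centred_roots :: "int \<Rightarrow> int \<Rightarrow> int set" where
  "centred_roots p a = {k. -a < 2 * k \<and> 2 * k \<le> a \<and> a dvd k^2 + p}"

lemma finite_centred_roots: "finite (centred_roots p a)"
  by (rule finite_subset[of _ "{-\<bar>a\<bar>..\<bar>a\<bar>}"]) (auto simp: centred_roots_def)

lemma reduced_forms_subset:
  assumes X: "\<And>a. 3 * a^2 \<le> 4 * p \<Longrightarrow> a \<le> X"
  shows "{g \<in> prim_pd_forms (-4 * p). reduced_bqf g}
           \<subseteq> (\<lambda>(a, k). (a, 2 * k, (k^2 + p) div a)) ` Sigma {1..X} (centred_roots p)"
proof
  fix g assume g: "g \<in> {g \<in> prim_pd_forms (-4 * p). reduced_bqf g}"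
  obtain a b c where g_abc: "g = (a, b, c)" by (cases g)
  have a: "0 < a" and disc: "b^2 - 4 * a * c = -4 * p" and red: "-a < b" "b \<le> a" "a \<le> c"
    using g g_abc by (auto simp: prim_pd_forms_def reduced_bqf_def)
  have "b^2 = 2 * (2 * a * c - 2 * p)" using disc by simp
  then have "even (b^2)" by (rule dvdI)
  then have "even b" by simp
  then obtain k where b: "b = 2 * k" by (elim evenE)
  have ac: "a * c = k^2 + p" using disc b by (simp add: power2_eq_square algebra_simps)
  have "a * a \<le> a * c" using red(3) a by simp
  then have "a^2 \<le> k^2 + p" using ac by (simp add: power2_eq_square)
  moreover have "4 * k^2 \<le> a^2"
  proof -
    have "\<bar>2 * k\<bar> \<le> a" using red b by auto
    then have "\<bar>2 * k\<bar>^2 \<le> a^2" by (rule power_mono) simp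
    then show ?thesis by (simp add: power_mult_distrib)
  qed
  ultimately have "a \<le> X" by (intro X) linarith
  with a red b ac have "(a, k) \<in> Sigma {1..X} (centred_roots p)"
    by (auto simp: centred_roots_def intro: dvdI[of _ a c])
  moreover have "g = (a, 2 * k, (k^2 + p) div a)" using g_abc b ac a by (simp flip: ac)
  ultimately show "g \<in> (\<lambda>(a, k). (a, 2 * k, (k^2 + p) div a)) ` Sigma {1..X} (centred_roots p)"
    by force
qed

lemma class_number_le_sum_centred_roots:
  assumes "\<And>a. 3 * a^2 \<le> 4 * p \<Longrightarrow> a \<le> X"
  shows "class_number (-4 * p) \<le> (\<Sum>a\<in>{1..X}. card (centred_roots p a))"
proof -
  let ?R = "{g \<in> prim_pd_forms (-4 * p). reduced_bqf g}"
  let ?S = "Sigma {1..X} (centred_roots p)"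
  let ?h = "\<lambda>(a, k). (a, 2 * k, (k^2 + p) div a)"
  have fin: "finite ?S" by (intro finite_SigmaI finite_centred_roots) simp
  have sub: "?R \<subseteq> ?h ` ?S" by (rule reduced_forms_subset[OF assms])
  have "class_number (-4 * p) \<le> card ?R"
    by (rule class_number_le_card_reduced[OF finite_subset[OF sub finite_imageI[OF fin]]])
  also have "\<dots> \<le> card (?h ` ?S)" by (rule card_mono[OF finite_imageI[OF fin] sub])
  also have "\<dots> \<le> card ?S" by (rule card_image_le[OF fin])
  also have "\<dots> = (\<Sum>a\<in>{1..X}. card (centred_roots p a))" by (simp add: finite_centred_roots)
  finally show ?thesis .
qed

definition roots_mod_pow2 :: "nat \<Rightarrow> int \<Rightarrow> int set" where
  "roots_mod_pow2 e p = {r. 0 \<le> r \<and> r < 2^e \<and> 2^e dvd r^2 + p}"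

lemma finite_roots_mod_pow2: "finite (roots_mod_pow2 e p)"
  by (rule finite_subset[of _ "{0..<2^e}"]) (auto simp: roots_mod_pow2_def)

lemma roots_mod_pow2_odd:
  assumes "odd p" "1 \<le> e" "r \<in> roots_mod_pow2 e p"
  shows "odd r"
proof -
  have "2 dvd (2::int)^e" using assms(2) by (simp add: dvd_power)
  with assms(3) have "even (r^2 + p)" unfolding roots_mod_pow2_def by (blast intro: dvd_trans)
  with assms(1) show ?thesis by simp
qed

lemma pow2_dvd_diff_or_sum:
  fixes r s :: int
  assumes "odd r" "odd s" "2 ^ (n + 2) dvd (r - s) * (r + s)"
  shows "2 ^ (n + 1) dvd r - s \<or> 2 ^ (n + 1) dvd r + s"
proof -
  have "even (r - s)" "even (r + s)" using assms(1,2) by auto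
  then obtain u v where u: "r - s = 2 * u" and v: "r + s = 2 * v" by (blast elim: evenE)
  have "4 * 2 ^ n dvd 4 * (u * v)" using assms(3) u v by (simp add: algebra_simps)
  then have uv: "2 ^ n dvd u * v" by (metis dvd_mult_cancel_left zero_neq_numeral)
  have "u + v = r" using u v by linarith
  with assms(1) have "odd (u + v)" by simp
  then consider "odd u" | "odd v" by auto
  then show ?thesis
  proof cases
    case 1
    then have "2 ^ n dvd v" using uv by (simp add: coprime_dvd_mult_right_iff)
    then show ?thesis using v by simp
  next
    case 2
    then have "2 ^ n dvd u" using uv by (simp add: coprime_dvd_mult_left_iff)
    then show ?thesis using u by simp
  qed
qed

lemma mod_pow2_Suc_cases:
  fixes r s :: int
  assumes "2 ^ n dvd r - s"
  shows "r mod 2 ^ Suc n = s mod 2 ^ Suc n \<or> r mod 2 ^ Suc n = (s + 2 ^ n) mod 2 ^ Suc n"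
proof -
  obtain j where "r - s = 2 ^ n * j" using assms by (elim dvdE)
  then have j: "r = s + 2 ^ n * j" by linarith
  define i where "i = j div 2"
  have "j = 2 * i \<or> j = 2 * i + 1" unfolding i_def by presburger
  then show ?thesis
  proof
    assume "j = 2 * i"
    then have "r = s + 2 ^ Suc n * i" using j by simp
    then show ?thesis by simp
  next
    assume "j = 2 * i + 1"
    then have "r = (s + 2 ^ n) + 2 ^ Suc n * i" using j by (simp add: algebra_simps)
    then show ?thesis by simp
  qed
qed

lemma roots_mod_pow2_subset:
  assumes p: "odd p" and e: "3 \<le> e" and r0: "r0 \<in> roots_mod_pow2 e p"
  shows "roots_mod_pow2 e p \<subseteq> (\<lambda>s. s mod 2^e) ` {r0, r0 + 2^(e-1), -r0, -r0 + 2^(e-1)}"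
proof
  fix r assume r: "r \<in> roots_mod_pow2 e p"
  define n where "n = e - 2"
  have en: "e = n + 2" "e - 1 = n + 1" using e by (simp_all add: n_def)
  have odd: "odd r" "odd r0"
    using roots_mod_pow2_odd[OF p _ r] roots_mod_pow2_odd[OF p _ r0] e by auto
  have "2 ^ e dvd (r^2 + p) - (r0^2 + p)"
    using r r0 unfolding roots_mod_pow2_def by (intro dvd_diff) auto
  also have "(r^2 + p) - (r0^2 + p) = (r - r0) * (r + r0)"
    by (simp add: power2_eq_square algebra_simps)
  finally have "2 ^ (n + 2) dvd (r - r0) * (r + r0)" unfolding en .
  then have "2 ^ (e - 1) dvd r - r0 \<or> 2 ^ (e - 1) dvd r - (-r0)"
    using pow2_dvd_diff_or_sum[OF odd] en by simp
  then obtain s where s: "s \<in> {r0, -r0}" and "2 ^ (e - 1) dvd r - s" by blast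
  moreover have "Suc (e - 1) = e" using e by simp
  ultimately have "r mod 2^e = s mod 2^e \<or> r mod 2^e = (s + 2^(e-1)) mod 2^e"
    using mod_pow2_Suc_cases[of "e - 1" r s] by simp
  moreover have "r = r mod 2^e" using r by (simp add: roots_mod_pow2_def)
  ultimately show "r \<in> (\<lambda>s. s mod 2^e) ` {r0, r0 + 2^(e-1), -r0, -r0 + 2^(e-1)}"
    using s by auto
qed

lemma card_roots_mod_pow2_le_1:
  assumes p: "odd p" and e: "e \<le> 1"
  shows "card (roots_mod_pow2 e p) \<le> 1"
proof -
  have "roots_mod_pow2 e p \<subseteq> {2 ^ e - 1}"
  proof
    fix r assume r: "r \<in> roots_mod_pow2 e p"
    then have "0 \<le> r" "r < 2 ^ e" by (simp_all add: roots_mod_pow2_def)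
    show "r \<in> {2 ^ e - 1}"
    proof (cases "e = 0")
      case False
      with e have "e = 1" by simp
      with r have "odd r" "0 \<le> r" "r < 2" using roots_mod_pow2_odd[OF p _ r]
        by (simp_all add: roots_mod_pow2_def)
      then have "r = 1" by presburger
      with \<open>e = 1\<close> show ?thesis by simp
    qed (use \<open>0 \<le> r\<close> \<open>r < 2 ^ e\<close> in simp)
  qed
  then show ?thesis using card_mono[of "{2 ^ e - 1}" "roots_mod_pow2 e p"] by simp
qed

lemma card_roots_mod_4_le:
  assumes p: "odd p"
  shows "card (roots_mod_pow2 2 p) \<le> 2"
proof -
  have "roots_mod_pow2 2 p \<subseteq> {1, 3}"
  proof
    fix r assume r: "r \<in> roots_mod_pow2 2 p"
    then have "odd r" "0 \<le> r" "r < 4" using roots_mod_pow2_odd[OF p _ r]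
      by (auto simp: roots_mod_pow2_def)
    then have "r = 1 \<or> r = 3" by presburger
    then show "r \<in> {1, 3}" by blast
  qed
  then show ?thesis using card_mono[of "{1, 3}" "roots_mod_pow2 2 p"] by simp
qed

lemma card_roots_mod_pow2_le_4:
  assumes p: "odd p" and e: "3 \<le> e"
  shows "card (roots_mod_pow2 e p) \<le> 4"
proof (cases "roots_mod_pow2 e p = {}")
  case False
  then obtain r0 where r0: "r0 \<in> roots_mod_pow2 e p" by blast
  let ?S = "{r0, r0 + 2^(e-1), -r0, -r0 + 2^(e-1)}"
  have "card (roots_mod_pow2 e p) \<le> card ((\<lambda>s. s mod 2^e) ` ?S)"
    using roots_mod_pow2_subset[OF p e r0] by (intro card_mono) auto
  also have "\<dots> \<le> card ?S" by (rule card_image_le) simp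
  also have "\<dots> \<le> 4" by (simp add: card_insert_if)
  finally show ?thesis .
qed simp

definition pow2_root_bound :: "int \<Rightarrow> nat" where
  "pow2_root_bound a = 1 + (if 4 dvd a then 1 else 0) + (if 8 dvd a then 2 else 0)"

lemma card_roots_mod_pow2_le:
  assumes p: "odd p" and a: "2 ^ e dvd a"
  shows "card (roots_mod_pow2 e p) \<le> pow2_root_bound a"
proof -
  have pow2_dvd: "2 ^ j dvd a" if "j \<le> e" for j
    using a le_imp_power_dvd[OF that] by (blast intro: dvd_trans)
  consider "e \<le> 1" | "e = 2" | "3 \<le> e" by linarith
  then show ?thesis
  proof cases
    case 1
    with p show ?thesis using card_roots_mod_pow2_le_1 by (fastforce simp: pow2_root_bound_def)
  next
    case 2
    then have "4 dvd a" using pow2_dvd[of 2] by simp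
    with p 2 show ?thesis using card_roots_mod_4_le by (fastforce simp: pow2_root_bound_def)
  next
    case 3
    then have "4 dvd a" "8 dvd a" using pow2_dvd[of 2] pow2_dvd[of 3] by simp_all
    with p 3 show ?thesis using card_roots_mod_pow2_le_4 by (fastforce simp: pow2_root_bound_def)
  qed
qed

definition odd_unitary_divisors :: "int \<Rightarrow> int set" where
  "odd_unitary_divisors a = {d. 0 < d \<and> d dvd a \<and> odd d \<and> coprime d (a div d)}"

lemma finite_odd_unitary_divisors: "0 < a \<Longrightarrow> finite (odd_unitary_divisors a)"
  by (rule finite_subset[of _ "{1..a}"]) (auto simp: odd_unitary_divisors_def intro: zdvd_imp_le)

lemma odd_unitary_divisors_double: "odd_unitary_divisors (2 * a) = odd_unitary_divisors a"
proof -
  have "d dvd 2 * a \<and> coprime d (2 * a div d) \<longleftrightarrow> d dvd a \<and> coprime d (a div d)"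
    if "odd d" for d :: int
  proof -
    from that have "coprime d 2" by simp
    then have "d dvd 2 * a \<longleftrightarrow> d dvd a" by (simp add: coprime_dvd_mult_right_iff)
    moreover have "2 * a div d = 2 * (a div d)" if "d dvd a" using that by (simp add: div_mult_swap)
    ultimately show ?thesis using \<open>coprime d 2\<close> by auto
  qed
  then show ?thesis unfolding odd_unitary_divisors_def by blast
qed

lemma odd_unitary_divisors_pow2_mult: "odd_unitary_divisors (2 ^ j * a) = odd_unitary_divisors a"
  by (induction j) (simp_all add: mult.assoc odd_unitary_divisors_double)

lemma dvd_gcd_mult_gcd:
  fixes m x y :: int
  assumes "m dvd x * y"
  shows "m dvd gcd m x * gcd m y"
proof -
  obtain u v where m: "m = u * v" and "u dvd x" "v dvd y" using dvd_productE[OF assms] by blast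
  then have "u dvd gcd m x" "v dvd gcd m y" by simp_all
  then show ?thesis unfolding m by (rule mult_dvd_mono)
qed

text \<open>With k0 fixed, the factor gcd m (k - k0) determines the root k modulo m.\<close>

lemma gcd_roots_split:
  fixes m k k0 p :: int
  assumes m: "odd m" "0 < m" and "coprime m k0" and "m dvd k^2 + p" "m dvd k0^2 + p"
  shows "gcd m (k - k0) * gcd m (k + k0) = m" "coprime (gcd m (k - k0)) (gcd m (k + k0))"
proof -
  let ?d = "gcd m (k - k0)" and ?f = "gcd m (k + k0)"
  show coprime: "coprime ?d ?f"
  proof (rule coprimeI)
    fix g assume "g dvd ?d" "g dvd ?f"
    then have "g dvd (k + k0) - (k - k0)" "g dvd m" by (meson dvd_diff gcd_dvd2 dvd_trans gcd_dvd1)+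
    then have "g dvd 2 * k0" "g dvd m" by (simp_all add: algebra_simps mult_2)
    moreover have "coprime m (2 * k0)" using assms(1,3) by simp
    ultimately show "is_unit g" by (meson coprime_common_divisor)
  qed
  have "m dvd (k^2 + p) - (k0^2 + p)" using assms(4,5) by (rule dvd_diff)
  also have "(k^2 + p) - (k0^2 + p) = (k - k0) * (k + k0)" by (simp add: power2_eq_square algebra_simps)
  finally have "m dvd ?d * ?f" by (rule dvd_gcd_mult_gcd)
  moreover have "?d * ?f dvd m" using coprime by (simp add: divides_mult)
  ultimately show "?d * ?f = m" using m by (intro zdvd_antisym_nonneg) auto
qed

lemma centred_roots_eqI:
  assumes "k \<in> centred_roots p a" "k' \<in> centred_roots p a" "a dvd k - k'"
  shows "k = k'"
proof (rule ccontr)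
  assume "k \<noteq> k'"
  with assms(3) have "\<bar>a\<bar> \<le> \<bar>k - k'\<bar>" by (intro dvd_imp_le_int) simp_all
  moreover have "\<bar>k - k'\<bar> < a" using assms(1,2) unfolding centred_roots_def by auto
  ultimately show False by simp
qed

lemma coprime_root:
  fixes m k p :: int
  assumes "coprime m p" "m dvd k^2 + p"
  shows "coprime m k"
proof (rule coprimeI)
  fix g assume g: "g dvd m" "g dvd k"
  have "g dvd k^2 + p" using g(1) assms(2) by (rule dvd_trans)
  moreover have "g dvd k^2" using g(2) by (simp add: power2_eq_square)
  ultimately have "g dvd (k^2 + p) - k^2" by (rule dvd_diff)
  then have "g dvd p" by simp
  with g(1) assms(1) show "is_unit g" using coprime_common_divisor by blast
qed

lemma gcd_root_diff_mem_odd_unitary_divisors: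
  fixes m k k0 p :: int
  assumes a: "a = 2 ^ e * m" and m: "odd m" "0 < m" and "coprime m k0"
    and "m dvd k^2 + p" "m dvd k0^2 + p"
  shows "gcd m (k - k0) \<in> odd_unitary_divisors a"
proof -
  let ?d = "gcd m (k - k0)" and ?f = "gcd m (k + k0)"
  have df: "?d * ?f = m" "coprime ?d ?f" using gcd_roots_split[OF m assms(4-6)] by blast+
  have "odd ?d" using m(1) by (meson dvd_trans gcd_dvd1)
  then have "coprime ?d (2 ^ e * ?f)" using df(2) by simp
  moreover have "a = ?d * (2 ^ e * ?f)" using a df(1) by (simp add: algebra_simps)
  moreover have "0 < ?d" using m(2) by simp
  ultimately show ?thesis using \<open>odd ?d\<close> by (simp add: odd_unitary_divisors_def)
qed

lemma dvd_root_diff_if_gcd_eq: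
  fixes m k k' k0 p :: int
  assumes m: "odd m" "0 < m" and "coprime m k0"
    and roots: "m dvd k^2 + p" "m dvd k'^2 + p" "m dvd k0^2 + p"
    and d: "gcd m (k - k0) = gcd m (k' - k0)"
  shows "m dvd k - k'"
proof -
  note split = gcd_roots_split[OF m assms(3) _ roots(3)]
  have "gcd m (k - k0) * gcd m (k + k0) = gcd m (k - k0) * gcd m (k' + k0)"
    using split(1)[OF roots(1)] split(1)[OF roots(2)] d by simp
  then have f: "gcd m (k + k0) = gcd m (k' + k0)" using m(2) by simp
  have "gcd m (k - k0) dvd (k - k0) - (k' - k0)" by (metis d dvd_diff gcd_dvd2)
  moreover have "gcd m (k + k0) dvd (k + k0) - (k' + k0)" by (metis f dvd_diff gcd_dvd2)
  ultimately have "gcd m (k - k0) * gcd m (k + k0) dvd k - k'"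
    using split(2)[OF roots(1)] by (simp add: divides_mult)
  then show ?thesis using split(1)[OF roots(1)] by simp
qed

lemma mod_pow2_mem_roots_mod_pow2:
  assumes "2 ^ e dvd k^2 + p"
  shows "k mod 2 ^ e \<in> roots_mod_pow2 e p"
proof -
  have "((k mod 2 ^ e)^2 + p) mod 2 ^ e = (k^2 + p) mod 2 ^ e"
    by (metis mod_add_left_eq power_mod)
  with assms show ?thesis by (simp add: roots_mod_pow2_def dvd_eq_mod_eq_0)
qed

lemma card_centred_roots_le:
  fixes p a :: int
  assumes p: "odd p" and a: "0 < a" and coprime: "coprime a p"
  shows "card (centred_roots p a) \<le> card (odd_unitary_divisors a) * pow2_root_bound a"
proof (cases "centred_roots p a = {}")
  case False
  then obtain k0 where k0: "k0 \<in> centred_roots p a" by blast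
  obtain m where a_eq: "a = 2 ^ multiplicity 2 a * m" and "\<not> 2 dvd m"
    using multiplicity_decompose'[of a 2] a by auto
  define e where "e = multiplicity 2 a"
  have a_em: "a = 2 ^ e * m" and "odd m" using a_eq \<open>\<not> 2 dvd m\<close> by (simp_all add: e_def)
  moreover have "0 < m" using a a_em by (metis zero_less_mult_pos zero_less_power zero_less_numeral)
  ultimately have m: "odd m" "0 < m" by simp_all
  have root: "m dvd k^2 + p" "2 ^ e dvd k^2 + p" if "k \<in> centred_roots p a" for k
    using that a_em by (auto simp: centred_roots_def intro: dvd_mult_left dvd_mult_right)
  have "coprime m p" using coprime a_em by simp
  then have k0_coprime: "coprime m k0" using root(1)[OF k0] by (rule coprime_root)
  define \<phi> where "\<phi> k = (gcd m (k - k0), k mod 2 ^ e)" for k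
  have "\<phi> ` centred_roots p a \<subseteq> odd_unitary_divisors a \<times> roots_mod_pow2 e p"
    using gcd_root_diff_mem_odd_unitary_divisors[OF a_em m k0_coprime root(1) root(1)[OF k0]]
      mod_pow2_mem_roots_mod_pow2[OF root(2)] by (auto simp: \<phi>_def)
  moreover have "inj_on \<phi> (centred_roots p a)"
  proof (rule inj_onI)
    fix k k' assume k: "k \<in> centred_roots p a" and k': "k' \<in> centred_roots p a"
      and "\<phi> k = \<phi> k'"
    then have "gcd m (k - k0) = gcd m (k' - k0)" and "k mod 2 ^ e = k' mod 2 ^ e"
      by (simp_all add: \<phi>_def)
    then have "m dvd k - k'" "2 ^ e dvd k - k'"
      using dvd_root_diff_if_gcd_eq[OF m k0_coprime root(1)[OF k] root(1)[OF k'] root(1)[OF k0]]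
      by (simp_all add: mod_eq_dvd_iff)
    moreover have "coprime (2 ^ e) m" using m(1) by simp
    ultimately have "a dvd k - k'" unfolding a_em by (simp add: divides_mult)
    with k k' show "k = k'" by (rule centred_roots_eqI)
  qed
  ultimately have "card (centred_roots p a) \<le> card (odd_unitary_divisors a \<times> roots_mod_pow2 e p)"
    using a
    by (intro card_inj_on_le) (simp_all add: finite_odd_unitary_divisors finite_roots_mod_pow2)
  also have "\<dots> \<le> card (odd_unitary_divisors a) * pow2_root_bound a"
    using card_roots_mod_pow2_le[OF p, of e a] a_em by (simp add: card_cartesian_product)
  finally show ?thesis .
qed simp

section \<open>Lattice points under a hyperbola\<close>

lemma le_div_iff_mult_int: "0 < c \<Longrightarrow> x \<le> y div c \<longleftrightarrow> c * x \<le> (y :: int)"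
proof
  assume "0 < c" "x \<le> y div c"
  then have "c * x \<le> c * (y div c)" by simp
  also have "\<dots> \<le> y"
    using \<open>0 < c\<close> by (metis mult_div_mod_eq le_add_same_cancel1 pos_mod_sign)
  finally show "c * x \<le> y" .
next
  assume "0 < c" "c * x \<le> y"
  then have "(c * x) div c \<le> y div c" by (intro zdiv_mono1) auto
  with \<open>0 < c\<close> show "x \<le> y div c" by simp
qed

definition odd_hyperbola :: "int \<Rightarrow> (int \<times> int) set" where
  "odd_hyperbola Y = {(d, f). 0 < d \<and> 0 < f \<and> odd d \<and> d * f \<le> Y}"

definition odd_hyperbola_3free :: "int \<Rightarrow> (int \<times> int) set" where
  "odd_hyperbola_3free Y = {(d, f) \<in> odd_hyperbola Y. \<not> (3 dvd d \<and> 3 dvd f)}"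

lemma odd_hyperbola_eq_Sigma:
  "odd_hyperbola Y = Sigma {d \<in> {1..Y}. odd d} (\<lambda>d. {1..Y div d})"
proof (intro set_eqI iffI)
  fix x assume "x \<in> odd_hyperbola Y"
  then obtain d f where x: "x = (d, f)" and "0 < d" "0 < f" "odd d" "d * f \<le> Y"
    by (auto simp: odd_hyperbola_def)
  moreover from this have "d * 1 \<le> d * f" by (intro mult_left_mono) auto
  then have "d \<le> Y" using \<open>d * f \<le> Y\<close> by simp
  ultimately show "x \<in> Sigma {d \<in> {1..Y}. odd d} (\<lambda>d. {1..Y div d})"
    by (auto simp: le_div_iff_mult_int)
next
  fix x assume "x \<in> Sigma {d \<in> {1..Y}. odd d} (\<lambda>d. {1..Y div d})"
  then show "x \<in> odd_hyperbola Y" by (auto simp: odd_hyperbola_def le_div_iff_mult_int)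
qed

lemma finite_odd_hyperbola: "finite (odd_hyperbola Y)"
  unfolding odd_hyperbola_eq_Sigma
  by (rule finite_SigmaI) (auto intro: finite_subset[OF _ finite_atLeastAtMost_int[of 1 Y]])

lemma finite_odd_hyperbola_3free: "finite (odd_hyperbola_3free Y)"
  by (rule finite_subset[OF _ finite_odd_hyperbola]) (auto simp: odd_hyperbola_3free_def)

lemma card_odd_hyperbola_3free:
  "card (odd_hyperbola_3free Y) + card (odd_hyperbola (Y div 9)) = card (odd_hyperbola Y)"
proof -
  let ?T = "{(d, f) \<in> odd_hyperbola Y. 3 dvd d \<and> 3 dvd f}"
  have split: "odd_hyperbola Y = odd_hyperbola_3free Y \<union> ?T"
    and disjoint: "odd_hyperbola_3free Y \<inter> ?T = {}"
    by (auto simp: odd_hyperbola_3free_def)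
  have "finite ?T" by (rule finite_subset[OF _ finite_odd_hyperbola]) auto
  have "card (odd_hyperbola Y) = card (odd_hyperbola_3free Y \<union> ?T)" using split by (rule arg_cong)
  also have "\<dots> = card (odd_hyperbola_3free Y) + card ?T"
    by (rule card_Un_disjoint[OF finite_odd_hyperbola_3free \<open>finite ?T\<close> disjoint])
  finally have "card (odd_hyperbola Y) = card (odd_hyperbola_3free Y) + card ?T" .
  moreover have "bij_betw (\<lambda>(d, f). (3 * d, 3 * f)) (odd_hyperbola (Y div 9)) ?T"
  proof (rule bij_betwI')
    fix x y assume "x \<in> odd_hyperbola (Y div 9)" "y \<in> odd_hyperbola (Y div 9)"
    show "((\<lambda>(d, f). (3 * d, 3 * f)) x = (\<lambda>(d, f). (3 * d, 3 * f)) y) = (x = y)"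
      by (cases x; cases y) auto
  next
    fix x assume "x \<in> odd_hyperbola (Y div 9)"
    then show "(\<lambda>(d, f). (3 * d, 3 * f)) x \<in> ?T"
      by (auto simp: odd_hyperbola_def le_div_iff_mult_int algebra_simps)
  next
    fix y assume "y \<in> ?T"
    then obtain d f where y: "y = (3 * d, 3 * f)" and "(3 * d, 3 * f) \<in> odd_hyperbola Y"
      by (auto elim!: dvdE)
    then have "(d, f) \<in> odd_hyperbola (Y div 9)"
      by (auto simp: odd_hyperbola_def le_div_iff_mult_int algebra_simps)
    with y show "\<exists>x \<in> odd_hyperbola (Y div 9). y = (\<lambda>(d, f). (3 * d, 3 * f)) x" by force
  qed
  then have "card (odd_hyperbola (Y div 9)) = card ?T" by (rule bij_betw_same_card)
  ultimately show ?thesis by simp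
qed

text \<open>The point (d, a div d) lies in odd_hyperbola_3free Y because d and a div d are coprime.\<close>

lemma sum_card_odd_unitary_divisors_le:
  "(\<Sum>a\<in>{1..Y}. card (odd_unitary_divisors a)) \<le> card (odd_hyperbola_3free Y)"
proof -
  let ?S = "Sigma {1..Y} odd_unitary_divisors"
  let ?h = "\<lambda>(a, d). (d, a div d)"
  have "inj_on ?h ?S"
    by (rule inj_onI) (auto simp: odd_unitary_divisors_def elim!: dvdE)
  moreover have "?h ` ?S \<subseteq> odd_hyperbola_3free Y"
  proof clarify
    fix a d assume a: "a \<in> {1..Y}" and d: "d \<in> odd_unitary_divisors a"
    then have d_props: "0 < d" "d dvd a" "odd d" "coprime d (a div d)"
      by (auto simp: odd_unitary_divisors_def)
    then have ad: "a = d * (a div d)" by simp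
    with a d_props have "0 < a div d" by (metis atLeastAtMost_iff int_one_le_iff_zero_less
        zero_less_mult_pos)
    moreover have "\<not> (3 dvd d \<and> 3 dvd a div d)"
      using d_props(4) coprime_common_divisor[of d "a div d" 3] by auto
    ultimately show "(d, a div d) \<in> odd_hyperbola_3free Y"
      using a d_props ad by (auto simp: odd_hyperbola_3free_def odd_hyperbola_def)
  qed
  ultimately have "card ?S \<le> card (odd_hyperbola_3free Y)"
    using finite_odd_hyperbola_3free by (rule card_inj_on_le)
  then show ?thesis by (simp add: finite_odd_unitary_divisors)
qed

lemma sum_multiples:
  fixes c Y :: int
  assumes c: "0 < c"
  shows "(\<Sum>a\<in>{1..Y}. if c dvd a then g a else 0) = (\<Sum>b\<in>{1..Y div c}. g (c * b))"
proof -
  have "(\<Sum>a\<in>{1..Y}. if c dvd a then g a else 0) = (\<Sum>a\<in>{a \<in> {1..Y}. c dvd a}. g a)"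
    by (rule sum.inter_filter[symmetric]) simp
  also have "{a \<in> {1..Y}. c dvd a} = (\<lambda>b. c * b) ` {1..Y div c}"
  proof (intro set_eqI iffI)
    fix a assume "a \<in> {a \<in> {1..Y}. c dvd a}"
    then obtain b where "a = c * b" "1 \<le> c * b" "c * b \<le> Y" by auto
    moreover from this c have "1 \<le> b" by (metis int_one_le_iff_zero_less zero_less_mult_pos)
    ultimately show "a \<in> (\<lambda>b. c * b) ` {1..Y div c}" using c by (auto simp: le_div_iff_mult_int)
  next
    fix a assume "a \<in> (\<lambda>b. c * b) ` {1..Y div c}"
    then obtain b where "a = c * b" "1 \<le> b" "c * b \<le> Y" using c by (auto simp: le_div_iff_mult_int)
    moreover from this c have "1 \<le> c * b" by (simp add: int_one_le_iff_zero_less)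
    ultimately show "a \<in> {a \<in> {1..Y}. c dvd a}" by auto
  qed
  also have "(\<Sum>a\<in>(\<lambda>b. c * b) ` {1..Y div c}. g a) = (\<Sum>b\<in>{1..Y div c}. g (c * b))"
    using c by (subst sum.reindex) (auto simp: inj_on_def)
  finally show ?thesis .
qed

definition form_count_bound :: "int \<Rightarrow> nat" where
  "form_count_bound X = card (odd_hyperbola_3free X) + card (odd_hyperbola_3free (X div 4))
                          + 2 * card (odd_hyperbola_3free (X div 8))"

lemma sum_card_odd_unitary_divisors_pow2_root_bound:
  "(\<Sum>a\<in>{1..Y}. card (odd_unitary_divisors a) * pow2_root_bound a) \<le> form_count_bound Y"
proof -
  let ?u = "\<lambda>a. card (odd_unitary_divisors a)"
  have "?u (4 * b) = ?u b" "?u (8 * b) = ?u b" for b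
    using odd_unitary_divisors_pow2_mult[of 2 b] odd_unitary_divisors_pow2_mult[of 3 b] by simp_all
  then have multiples: "(\<Sum>a\<in>{1..Y}. if 4 dvd a then ?u a else 0) = (\<Sum>b\<in>{1..Y div 4}. ?u b)"
    "(\<Sum>a\<in>{1..Y}. if 8 dvd a then ?u a else 0) = (\<Sum>b\<in>{1..Y div 8}. ?u b)"
    by (simp_all add: sum_multiples)
  have "?u a * pow2_root_bound a
          = ?u a + (if 4 dvd a then ?u a else 0) + 2 * (if 8 dvd a then ?u a else 0)" for a
    by (simp add: pow2_root_bound_def algebra_simps)
  then have "(\<Sum>a\<in>{1..Y}. ?u a * pow2_root_bound a)
          = (\<Sum>a\<in>{1..Y}. ?u a) + (\<Sum>a\<in>{1..Y}. if 4 dvd a then ?u a else 0)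
              + 2 * (\<Sum>a\<in>{1..Y}. if 8 dvd a then ?u a else 0)"
    by (simp add: sum.distrib sum_distrib_left)
  also have "\<dots> \<le> form_count_bound Y"
    unfolding multiples form_count_bound_def
    using sum_card_odd_unitary_divisors_le[of Y] sum_card_odd_unitary_divisors_le[of "Y div 4"]
      sum_card_odd_unitary_divisors_le[of "Y div 8"] by simp
  finally show ?thesis .
qed

lemma sum_card_centred_roots_le:
  fixes p X :: int
  assumes "prime p" "odd p" "X < p"
  shows "(\<Sum>a\<in>{1..X}. card (centred_roots p a)) \<le> form_count_bound X"
proof -
  have "card (centred_roots p a) \<le> card (odd_unitary_divisors a) * pow2_root_bound a"
    if a: "a \<in> {1..X}" for a
  proof (rule card_centred_roots_le)
    have "\<not> p dvd a" using a assms(3) zdvd_imp_le[of p a] by auto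
    with assms(1) have "coprime p a" by (rule prime_imp_coprime)
    then show "coprime a p" by (simp add: coprime_commute)
  qed (use a assms(2) in auto)
  then have "(\<Sum>a\<in>{1..X}. card (centred_roots p a))
               \<le> (\<Sum>a\<in>{1..X}. card (odd_unitary_divisors a) * pow2_root_bound a)"
    by (rule sum_mono)
  also have "\<dots> \<le> form_count_bound X" by (rule sum_card_odd_unitary_divisors_pow2_root_bound)
  finally show ?thesis .
qed

section \<open>Analytic estimates\<close>

lemma ln2_bounds: "693/1000 \<le> ln (2::real)" "ln (2::real) \<le> 6932/10000"
  using ln_approx_bounds[of 2 3] by (simp_all add: eval_nat_numeral)

lemma ln3_le: "ln (3::real) \<le> 10987/10000"
  using ln_approx_bounds[of 3 4] by (simp add: eval_nat_numeral)

lemma ln6_le: "ln (6::real) \<le> 17919/10000"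
  using ln_mult[of 2 3] ln2_bounds(2) ln3_le by simp

lemma pi_le: "pi \<le> 31416/10000"
  using pi_approx(2) by simp

definition odd_harmonic :: "int \<Rightarrow> real" where
  "odd_harmonic Y = (\<Sum>d\<in>{1..Y}. if odd d then 1 / real_of_int d else 0)"

lemma odd_harmonic_Suc:
  "0 \<le> Y \<Longrightarrow>
     odd_harmonic (Y + 1) = odd_harmonic Y + (if odd (Y + 1) then 1 / real_of_int (Y + 1) else 0)"
  by (simp add: odd_harmonic_def atLeastAtMostPlus1_int_conv add.commute)

lemma odd_harmonic_even: "odd_harmonic (2 * int n + 2) = odd_harmonic (2 * int n + 1)"
  using odd_harmonic_Suc[of "2 * int n + 1"] by (simp add: add.assoc)

lemma odd_harmonic_odd_bounds:
  "odd_harmonic (2 * int n + 1) \<le> 1 + ln (real n + 1) / 2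
     \<and> ln (2 * real n + 3) / 2 \<le> odd_harmonic (2 * int n + 1)"
proof (induction n)
  case 0
  have "odd_harmonic 1 = 1" by (simp add: odd_harmonic_def)
  with ln3_le show ?case by simp
next
  case (Suc n)
  have "odd_harmonic (2 * int (Suc n) + 1) = odd_harmonic ((2 * int n + 2) + 1)"
    by (simp add: algebra_simps)
  also have "\<dots> = odd_harmonic (2 * int n + 1) + 1 / (2 * real n + 3)"
    using odd_harmonic_Suc[of "2 * int n + 2"] odd_harmonic_even[of n] by simp
  finally have step:
    "odd_harmonic (2 * int (Suc n) + 1) = odd_harmonic (2 * int n + 1) + 1 / (2 * real n + 3)" .
  have "2 * ((real n + 2) - (real n + 1)) / ((real n + 1) + (real n + 2))
          \<le> ln (real n + 2) - ln (real n + 1)"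
    by (rule ln_inverse_approx_ge) auto
  then have up: "1 / (2 * real n + 3) \<le> (ln (real n + 2) - ln (real n + 1)) / 2"
    by (simp add: field_simps)
  have "ln ((2 * real n + 5) / (2 * real n + 3)) \<le> (2 * real n + 5) / (2 * real n + 3) - 1"
    by (rule ln_le_minus_one) auto
  then have lo: "(ln (2 * real n + 5) - ln (2 * real n + 3)) / 2 \<le> 1 / (2 * real n + 3)"
    by (simp add: ln_div field_simps)
  show ?case using Suc.IH step up lo by (simp add: algebra_simps)
qed

lemma int_odd_even_cases:
  assumes "1 \<le> Y"
  obtains n where "Y = 2 * int n + 1" | n where "Y = 2 * int n + 2"
proof (cases "odd Y")
  case True
  then obtain k where "Y = 2 * k + 1" by (elim oddE)
  with assms that(1)[of "nat k"] show ?thesis by simp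
next
  case False
  then have "even Y" by simp
  then obtain k where "Y = 2 * k" by (elim evenE)
  with assms that(2)[of "nat (k - 1)"] show ?thesis by simp
qed

lemma odd_harmonic_le:
  assumes "1 \<le> Y"
  shows "odd_harmonic Y \<le> 1 + ln ((real_of_int Y + 1) / 2) / 2"
  using assms
proof (cases rule: int_odd_even_cases)
  case (1 n)
  then have "ln ((real_of_int Y + 1) / 2) = ln (real n + 1)" by simp
  moreover have "odd_harmonic Y = odd_harmonic (2 * int n + 1)" using 1 by simp
  ultimately show ?thesis using odd_harmonic_odd_bounds[of n] by linarith
next
  case (2 n)
  then have "ln (real n + 1) \<le> ln ((real_of_int Y + 1) / 2)" by simp
  moreover have "odd_harmonic Y = odd_harmonic (2 * int n + 1)" using 2 odd_harmonic_even by simp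
  ultimately show ?thesis using odd_harmonic_odd_bounds[of n] by linarith
qed

lemma odd_harmonic_ge:
  assumes "0 \<le> Y"
  shows "ln (real_of_int Y + 1) / 2 \<le> odd_harmonic Y"
proof (cases "Y = 0")
  case True
  then show ?thesis by (simp add: odd_harmonic_def)
next
  case False
  with assms have "1 \<le> Y" by simp
  then show ?thesis
  proof (cases rule: int_odd_even_cases)
    case (1 n)
    then have "ln (real_of_int Y + 1) \<le> ln (2 * real n + 3)" by simp
    moreover have "odd_harmonic Y = odd_harmonic (2 * int n + 1)" using 1 by simp
    ultimately show ?thesis using odd_harmonic_odd_bounds[of n] by linarith
  next
    case (2 n)
    then have "ln (real_of_int Y + 1) = ln (2 * real n + 3)" by simp
    moreover have "odd_harmonic Y = odd_harmonic (2 * int n + 1)" using 2 odd_harmonic_even by simp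
    ultimately show ?thesis using odd_harmonic_odd_bounds[of n] by linarith
  qed
qed

text \<open>A list sum rather than a set sum, so that code_simp evaluates it quickly.\<close>

definition odd_hyperbola_count :: "int \<Rightarrow> int" where
  "odd_hyperbola_count Y = (\<Sum>d\<leftarrow>[1..Y]. if odd d then Y div d else 0)"

lemma odd_hyperbola_count_eq_sum:
  "odd_hyperbola_count Y = (\<Sum>d\<in>{1..Y}. if odd d then Y div d else 0)"
  unfolding odd_hyperbola_count_def by (simp add: sum_list_distinct_conv_sum_set)

lemma int_card_odd_hyperbola: "int (card (odd_hyperbola Y)) = odd_hyperbola_count Y"
proof -
  have "card (odd_hyperbola Y) = (\<Sum>d\<in>{d \<in> {1..Y}. odd d}. card {1..Y div d})"
    unfolding odd_hyperbola_eq_Sigma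
    by (rule card_SigmaI) (auto intro: finite_subset[OF _ finite_atLeastAtMost_int[of 1 Y]])
  then have "int (card (odd_hyperbola Y)) = (\<Sum>d\<in>{d \<in> {1..Y}. odd d}. Y div d)"
    by (simp add: pos_imp_zdiv_nonneg_iff)
  also have "\<dots> = odd_hyperbola_count Y"
    unfolding odd_hyperbola_count_eq_sum by (rule sum.inter_filter) simp
  finally show ?thesis .
qed

lemma real_card_odd_hyperbola:
  "real (card (odd_hyperbola Y)) = (\<Sum>d\<in>{1..Y}. if odd d then real_of_int (Y div d) else 0)"
proof -
  have "real (card (odd_hyperbola Y)) = real_of_int (odd_hyperbola_count Y)"
    by (simp flip: int_card_odd_hyperbola)
  then show ?thesis by (simp add: odd_hyperbola_count_eq_sum of_int_sum if_distrib cong: if_cong)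
qed

lemma real_of_int_div_bounds:
  fixes Y d :: int
  shows "real_of_int (Y div d) \<le> real_of_int Y / real_of_int d"
    and "real_of_int Y / real_of_int d - 1 \<le> real_of_int (Y div d)"
  using of_int_floor_le[of "real_of_int Y / real_of_int d"]
    real_of_int_floor_gt_diff_one[of "real_of_int Y / real_of_int d"]
  by (simp_all add: floor_divide_of_int_eq)

lemma card_odd_hyperbola_le:
  "0 \<le> Y \<Longrightarrow> real (card (odd_hyperbola Y)) \<le> real_of_int Y * odd_harmonic Y"
  unfolding real_card_odd_hyperbola odd_harmonic_def sum_distrib_left
  by (intro sum_mono) (simp add: real_of_int_div_bounds)

lemma sum_odd_indicator:
  "2 * (\<Sum>d\<in>{1..int n}. if odd d then 1 else 0 :: real) = real n + (if odd n then 1 else 0)"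
proof (induction n)
  case (Suc n)
  have "{1..int (Suc n)} = insert (int n + 1) {1..int n}" by auto
  with Suc.IH show ?case by auto
qed simp

lemma card_odd_hyperbola_ge:
  assumes "0 \<le> Y"
  shows "real_of_int Y * odd_harmonic Y - (real_of_int Y + 1) / 2 \<le> real (card (odd_hyperbola Y))"
proof -
  obtain n where Y: "Y = int n" using assms nonneg_int_cases by blast
  define c :: real where "c = (\<Sum>d\<in>{1..Y}. if odd d then 1 else 0)"
  have "real_of_int Y * odd_harmonic Y - c
          = (\<Sum>d\<in>{1..Y}. if odd d then real_of_int Y / real_of_int d - 1 else 0)"
    unfolding c_def odd_harmonic_def sum_distrib_left sum_subtractf[symmetric]
    by (intro sum.cong) auto
  also have "\<dots> \<le> real (card (odd_hyperbola Y))"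
    unfolding real_card_odd_hyperbola by (intro sum_mono) (simp add: real_of_int_div_bounds)
  finally have "real_of_int Y * odd_harmonic Y - c \<le> real (card (odd_hyperbola Y))" .
  moreover have "c \<le> (real_of_int Y + 1) / 2"
  proof -
    have "2 * c = real n + (if odd n then 1 else 0)"
      using sum_odd_indicator[of n] Y by (simp add: c_def)
    with Y show ?thesis by (cases "odd n") simp_all
  qed
  ultimately show ?thesis by (meson diff_left_mono order_trans)
qed

definition hyperbola_3free_bound :: "real \<Rightarrow> real" where
  "hyperbola_3free_bound y = 4/9 * (y * ln y) + 5/6 * y + 4/9 * ln (y + 1) + 1"

lemma mult_ln_Suc_le: "0 < y \<Longrightarrow> y * ln (y + 1) \<le> y * ln y + (1 :: real)"
proof -
  assume y: "0 < y"
  have "ln ((y + 1) / y) \<le> (y + 1) / y - 1" by (rule ln_le_minus_one) (use y in simp)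
  with y have "ln (y + 1) \<le> ln y + 1 / y" by (simp add: ln_div field_simps)
  with y have "y * ln (y + 1) \<le> y * (ln y + 1 / y)" by (simp add: mult_left_mono)
  with y show ?thesis by (simp add: algebra_simps)
qed

lemma card_odd_hyperbola_le_log:
  fixes Y :: int
  defines "y \<equiv> real_of_int Y"
  assumes Y: "1 \<le> Y"
  shows "real (card (odd_hyperbola Y)) \<le> y + y * ln (y + 1) / 2 - y * ln 2 / 2"
proof -
  have y: "1 \<le> y" using Y by (simp add: y_def)
  have "real (card (odd_hyperbola Y)) \<le> y * (1 + ln ((y + 1) / 2) / 2)"
    using card_odd_hyperbola_le[of Y] odd_harmonic_le[OF Y] Y y
    by (auto simp: y_def intro: order_trans mult_left_mono)
  then show ?thesis using y by (simp add: ln_div algebra_simps diff_divide_distrib)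
qed

lemma card_odd_hyperbola_ge_log:
  fixes Z :: int
  defines "z \<equiv> real_of_int Z"
  assumes Z: "0 \<le> Z"
  shows "z * ln (z + 1) - z - 1 \<le> 2 * real (card (odd_hyperbola Z))"
proof -
  have "ln (z + 1) / 2 \<le> odd_harmonic Z" unfolding z_def using Z by (rule odd_harmonic_ge)
  moreover have "0 \<le> z" using Z by (simp add: z_def)
  ultimately have "z * (ln (z + 1) / 2) \<le> z * odd_harmonic Z" by (rule mult_left_mono)
  moreover have "z * odd_harmonic Z - (z + 1) / 2 \<le> real (card (odd_hyperbola Z))"
    using card_odd_hyperbola_ge[OF Z, folded z_def] .
  ultimately show ?thesis by (simp add: field_simps)
qed

text \<open>The points of the hyperbola with 3 dividing both coordinates are 3 times the points
  under Y/9, so subtracting the lower estimate for Y div 9 from the upper one for Y saves the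
  factor 8/9 in front of y ln y.\<close>

lemma card_odd_hyperbola_3free_le:
  assumes Y: "1 \<le> Y"
  shows "real (card (odd_hyperbola_3free Y)) \<le> hyperbola_3free_bound (real_of_int Y)"
proof -
  define y z where "y = real_of_int Y" and "z = real_of_int (Y div 9)"
  have y: "1 \<le> y" using Y by (simp add: y_def)
  have "9 * (Y div 9) \<le> Y" "Y \<le> 9 * (Y div 9) + 8" and Z: "0 \<le> Y div 9" using Y by linarith+
  then have "real_of_int (9 * (Y div 9)) \<le> real_of_int Y"
    "real_of_int Y \<le> real_of_int (9 * (Y div 9) + 8)" "real_of_int 0 \<le> real_of_int (Y div 9)"
    by (simp_all only: of_int_le_iff)
  then have z: "9 * z \<le> y" "y - 8 \<le> 9 * z" "0 \<le> z" unfolding y_def z_def by simp_all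
  have count: "real (card (odd_hyperbola_3free Y))
                 = real (card (odd_hyperbola Y)) - real (card (odd_hyperbola (Y div 9)))"
    using card_odd_hyperbola_3free[of Y] by (simp flip: of_nat_add)
  note upper = card_odd_hyperbola_le_log[OF Y, folded y_def]
  note lower = card_odd_hyperbola_ge_log[OF Z, folded z_def]
  have yl: "y * ln (y + 1) \<le> y * ln y + 1" using y by (simp add: mult_ln_Suc_le)
  have l2: "y * (693/1000) \<le> y * ln 2" using ln2_bounds(1) y by simp
  show ?thesis
  proof (cases "y \<le> 8")
    case True
    have "ln y \<le> ln 8" using True y by simp
    also have "\<dots> = 3 * ln 2" using ln_realpow[of 2 3] by simp
    also have "\<dots> \<le> 3 * (6932/10000)" using ln2_bounds(2) by simp
    finally have "y * ln y \<le> y * (3 * (6932/10000))" using y by simp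
    moreover have "0 \<le> z * ln (z + 1)" using z(3) by simp
    moreover have "0 \<le> ln (y + 1)" using y by simp
    ultimately show ?thesis using count upper lower yl l2 y z(1)
      unfolding hyperbola_3free_bound_def y_def[symmetric] by linarith
  next
    case False
    have "ln ((y + 1) / 9) \<le> ln (z + 1)" using z(2) y by simp
    moreover have "0 \<le> ln ((y + 1) / 9)" using False by simp
    ultimately have "(y - 8) * ln ((y + 1) / 9) \<le> (9 * z) * ln (z + 1)"
      using z(2,3) False by (intro mult_mono) auto
    moreover have "ln ((y + 1) / 9) = ln (y + 1) - 2 * ln 3"
      using y ln_realpow[of 3 2] by (simp add: ln_div)
    ultimately have "(y - 8) * (ln (y + 1) - 2 * ln 3) \<le> (9 * z) * ln (z + 1)" by simp
    then have "y * ln (y + 1) - 8 * ln (y + 1) - 2 * (y * ln 3) + 16 * ln 3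
                       \<le> 9 * (z * ln (z + 1))"
      by (simp add: algebra_simps)
    moreover have "y * ln 3 \<le> y * (10987/10000)" using ln3_le y by simp
    moreover have "0 \<le> ln (3::real)" by simp
    ultimately show ?thesis using count upper lower yl l2 y z(1)
      unfolding hyperbola_3free_bound_def y_def[symmetric] by linarith
  qed
qed

lemma hyperbola_3free_bound_mono:
  "1 \<le> u \<Longrightarrow> u \<le> v \<Longrightarrow> hyperbola_3free_bound u \<le> hyperbola_3free_bound v"
  unfolding hyperbola_3free_bound_def
  by (intro add_mono mult_left_mono mult_mono) auto

lemma card_odd_hyperbola_3free_div_le:
  fixes X c :: int
  assumes "0 < c" "c \<le> X"
  shows "real (card (odd_hyperbola_3free (X div c)))
           \<le> hyperbola_3free_bound (real_of_int X / real_of_int c)"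
proof -
  have "1 \<le> X div c" using assms by (simp add: le_div_iff_mult_int)
  then have "real (card (odd_hyperbola_3free (X div c)))
               \<le> hyperbola_3free_bound (real_of_int (X div c))"
    by (rule card_odd_hyperbola_3free_le)
  also have "\<dots> \<le> hyperbola_3free_bound (real_of_int X / real_of_int c)"
    using real_of_int_div_bounds(1)[of X c] \<open>1 \<le> X div c\<close>
    by (intro hyperbola_3free_bound_mono) auto
  finally show ?thesis .
qed

lemma form_count_bound_le:
  fixes X :: int
  defines "x \<equiv> real_of_int X"
  assumes X: "8 \<le> X"
  shows "real (form_count_bound X)
           \<le> 2/3 * (x * ln x) - 5/9 * (x * ln 2) + 5/4 * x + 16/9 * ln (x + 1) + 4"
proof -
  have x: "8 \<le> x" using X by (simp add: x_def)
  have "ln (4::real) = 2 * ln 2" "ln (8::real) = 3 * ln 2"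
    using ln_realpow[of 2 2] ln_realpow[of 2 3] by simp_all
  then have b4: "hyperbola_3free_bound (x / 4)
               = 1/9 * (x * ln x) - 2/9 * (x * ln 2) + 5/24 * x + 4/9 * ln (x / 4 + 1) + 1"
    and b8: "hyperbola_3free_bound (x / 8)
               = 1/18 * (x * ln x) - 1/6 * (x * ln 2) + 5/48 * x + 4/9 * ln (x / 8 + 1) + 1"
    using x by (simp_all add: hyperbola_3free_bound_def ln_div algebra_simps)
  have "real (card (odd_hyperbola_3free X)) \<le> hyperbola_3free_bound x"
    unfolding x_def using X by (intro card_odd_hyperbola_3free_le) simp
  moreover have "real (card (odd_hyperbola_3free (X div 4))) \<le> hyperbola_3free_bound (x / 4)"
    "real (card (odd_hyperbola_3free (X div 8))) \<le> hyperbola_3free_bound (x / 8)"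
    unfolding x_def
    using card_odd_hyperbola_3free_div_le[of 4 X] card_odd_hyperbola_3free_div_le[of 8 X] X
    by simp_all
  moreover have "ln (x / 4 + 1) \<le> ln (x + 1)" "ln (x / 8 + 1) \<le> ln (x + 1)" "0 \<le> ln (x / 8 + 1)"
    using x by simp_all
  ultimately show ?thesis
    unfolding form_count_bound_def b4 b8 unfolding hyperbola_3free_bound_def
    by (simp only: of_nat_add of_nat_mult of_nat_numeral)
qed

definition class_number_bound :: "real \<Rightarrow> real" where
  "class_number_bound q = 3 * sqrt q / (2 * pi) * (ln q + 5 - 2 * ln 6)"

lemma class_number_bound_mono:
  assumes "1 \<le> a" "a \<le> b"
  shows "class_number_bound a \<le> class_number_bound b"
proof -
  have "0 \<le> ln a + 5 - 2 * ln 6" using ln_ge_zero[OF assms(1)] ln6_le by simp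
  with assms show ?thesis unfolding class_number_bound_def
    by (intro mult_mono divide_right_mono) auto
qed

lemma class_number_bound_ge:
  fixes x q :: real
  assumes x: "1 \<le> x" and q: "3 * x^2 \<le> 4 * q"
  shows "413/500 * (x * ln x) + 233/500 * x \<le> class_number_bound q"
proof -
  have "0 < 3 * x^2" using x by simp
  with q have q_pos: "0 < q" by linarith
  have "1732/1000 \<le> sqrt (3::real)" by (rule real_le_rsqrt) (simp add: power2_eq_square)
  then have "1732/1000 * x / 2 \<le> sqrt 3 * x / 2" using x by simp
  also have "\<dots> = sqrt (3 * x^2 / 4)" using x by (simp add: real_sqrt_mult real_sqrt_divide)
  also have "\<dots> \<le> sqrt q" using q by simp
  finally have sqrt_q: "1732/1000 * x / 2 \<le> sqrt q" .
  have "ln 3 + 2 * ln x - 2 * ln 2 = ln (3 * x^2 / 4)"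
    using x ln_realpow[of x 2] ln_realpow[of 2 2] by (simp add: ln_div ln_mult)
  also have "\<dots> \<le> ln q" using q x q_pos by simp
  finally have "2 * ln x + 11285/10000 \<le> ln q + 5 - 2 * ln 6"
    using ln_mult[of 2 3] ln2_bounds(2) ln3_le by simp
  moreover have "3 / (2 * (31416/10000)) \<le> 3 / (2 * pi)"
    using pi_le pi_gt_zero by (intro divide_left_mono) auto
  then have "3 / (2 * (31416/10000)) * (1732/1000 * x / 2) \<le> 3 / (2 * pi) * sqrt q"
    using sqrt_q x by (intro mult_mono) auto
  then have "3 / (2 * (31416/10000)) * (1732/1000 * x / 2) \<le> 3 * sqrt q / (2 * pi)" by simp
  ultimately have "3 / (2 * (31416/10000)) * (1732/1000 * x / 2) * (2 * ln x + 11285/10000)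
                     \<le> class_number_bound q"
    unfolding class_number_bound_def using x q_pos by (intro mult_mono) auto
  moreover have "3 / (2 * (31416/10000)) * (1732/1000 * x / 2) * (2 * ln x + 11285/10000)
                   = 2165/2618 * (x * ln x) + 977281/2094400 * x"
    by (simp add: field_simps)
  moreover have "0 \<le> x * ln x" using x by simp
  ultimately show ?thesis using x by linarith
qed

lemma form_count_bound_le_large:
  fixes X :: int and q :: real
  assumes X: "64 \<le> X" and q: "3 * (real_of_int X)^2 \<le> 4 * q"
  shows "real (form_count_bound X) \<le> class_number_bound q"
proof -
  define x where "x = real_of_int X"
  have x: "64 \<le> x" using X by (simp add: x_def)
  have "ln (64::real) = 6 * ln 2" using ln_realpow[of 2 6] by simp
  moreover have "ln 64 \<le> ln x" using x by simp
  ultimately have "415/100 \<le> ln x" using ln2_bounds(1) by linarith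
  then have "x * (415/100) \<le> x * ln x" "64 * ln x \<le> x * ln x"
    using x by (simp_all add: mult_right_mono)
  moreover have "ln (x + 1) \<le> ln x + 1"
  proof -
    have "ln (x + 1) \<le> ln (2 * x)" using x by simp
    also have "\<dots> = ln 2 + ln x" using x by (simp add: ln_mult)
    finally show ?thesis using ln2_bounds(2) by simp
  qed
  moreover have "x * (693/1000) \<le> x * ln 2" using ln2_bounds(1) x by simp
  moreover have "413/500 * (x * ln x) + 233/500 * x \<le> class_number_bound q"
    using class_number_bound_ge[of x q] x q by (simp add: x_def)
  ultimately show ?thesis using form_count_bound_le[of X] X x unfolding x_def[symmetric] by linarith
qed

section \<open>Small discriminants\<close>

definition hyperbola_3free_count :: "int \<Rightarrow> int" where
  "hyperbola_3free_count Y = odd_hyperbola_count Y - odd_hyperbola_count (Y div 9)"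

lemma int_card_odd_hyperbola_3free: "int (card (odd_hyperbola_3free Y)) = hyperbola_3free_count Y"
  using card_odd_hyperbola_3free[of Y]
  unfolding hyperbola_3free_count_def int_card_odd_hyperbola[symmetric] by linarith

text \<open>With t = 2^k \<le> q, the number M / (10000 (q + t)) equals
  k * 0.693 + 2 (q - t) / (q + t) + 5 - 2 * 1.7919, a lower bound for ln q + 5 - 2 ln 6; the
  certificate is the inequality 2 * 3.1416 * F \<le> 3 sqrt q * M / (10000 (q + t)), squared and
  cleared of denominators.\<close>

definition class_number_bound_certificate :: "int \<Rightarrow> int \<Rightarrow> nat \<Rightarrow> bool" where
  "class_number_bound_certificate F q k \<longleftrightarrow>
     (let t = 2 ^ k; M = 6930 * int k * (q + t) + 20000 * (q - t) + 14162 * (q + t)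
      in t \<le> q \<and> (2 * 31416 * F * 10000 * (q + t))^2 \<le> 9 * q * M^2 * 10^8)"

text \<open>max 5 ((3X^2 + 3) div 4) is the least admissible q with 3X^2 \<le> 4q.\<close>

definition small_case_check :: "int \<Rightarrow> bool" where
  "small_case_check X \<longleftrightarrow>
     (\<exists>k \<in> set [0..<12]. class_number_bound_certificate
        (hyperbola_3free_count X + hyperbola_3free_count (X div 4)
           + 2 * hyperbola_3free_count (X div 8))
        (max 5 ((3 * X^2 + 3) div 4)) k)"

lemma small_case_check_upto_63: "list_all small_case_check [0..63]"
  by code_simp

lemma ln_ge_pow2_approx:
  fixes n :: real
  assumes "2 ^ k \<le> n"
  shows "real k * (693/1000) + 2 * (n - 2 ^ k) / (n + 2 ^ k) \<le> ln n"
proof -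
  define t :: real where "t = 2 ^ k"
  have t: "0 < t" "t \<le> n" using assms by (simp_all add: t_def)
  have "2 * (n - t) / (n + t) \<le> ln n - ln t"
  proof (cases "t = n")
    case False
    with t have "2 * (n - t) / (t + n) \<le> ln n - ln t" by (intro ln_inverse_approx_ge) auto
    then show ?thesis by (simp add: add.commute)
  qed simp
  moreover have "ln t = real k * ln 2" by (simp add: t_def ln_realpow)
  moreover have "real k * (693/1000) \<le> real k * ln 2" using ln2_bounds(1) by (intro mult_left_mono) auto
  ultimately show ?thesis unfolding t_def by linarith
qed

lemma le_class_number_bound:
  fixes f m q :: real
  assumes "2 * (31416/10000) * f \<le> 3 * sqrt q * m"
    and m: "0 \<le> m" "m \<le> ln q + 5 - 2 * ln 6" and q: "0 \<le> q"
  shows "f \<le> class_number_bound q"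
proof -
  have "f \<le> 3 * sqrt q * m / (2 * (31416/10000))" using assms(1) by simp
  also have "\<dots> \<le> 3 * sqrt q * m / (2 * pi)"
    using m q pi_le pi_gt_zero by (intro divide_left_mono) auto
  also have "\<dots> = 3 * sqrt q / (2 * pi) * m" by simp
  also have "\<dots> \<le> class_number_bound q"
    unfolding class_number_bound_def using m q by (intro mult_left_mono) auto
  finally show ?thesis .
qed

lemma class_number_bound_certificate_sound:
  assumes q: "5 \<le> q" and F: "0 \<le> F" and cert: "class_number_bound_certificate F q k"
  shows "real_of_int F \<le> class_number_bound (real_of_int q)"
proof -
  define t M where "t = (2::int) ^ k"
    and "M = 6930 * int k * (q + t) + 20000 * (q - t) + 14162 * (q + t)"
  have t: "0 < t" "t \<le> q"
    and check: "(2 * 31416 * F * 10000 * (q + t))^2 \<le> 9 * q * M^2 * 10^8"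
    using cert by (simp_all add: class_number_bound_certificate_def Let_def t_def M_def)
  define f qr tr where "f = real_of_int F" and "qr = real_of_int q" and "tr = real_of_int t"
  define m where "m = real_of_int M / (10000 * (qr + tr))"
  have qr: "5 \<le> qr" and tr: "0 < tr" "tr \<le> qr" and f: "0 \<le> f"
    using q t F by (simp_all add: qr_def tr_def f_def)
  have M: "real_of_int M = m * (10000 * (qr + tr))" using qr tr by (simp add: m_def)
  have "m = real k * (693/1000) + 2 * (qr - tr) / (qr + tr) + 5 - 2 * (17919/10000)"
    using qr tr by (simp add: m_def M_def qr_def tr_def field_simps)
  moreover have "real k * (693/1000) + 2 * (qr - tr) / (qr + tr) \<le> ln qr"
    using ln_ge_pow2_approx[of k qr] t by (simp add: qr_def tr_def t_def)
  moreover have "0 \<le> 2 * (qr - tr) / (qr + tr)" "0 \<le> real k" using tr by simp_all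
  ultimately have m: "0 \<le> m" "m \<le> ln qr + 5 - 2 * ln 6" using ln6_le by linarith+
  have "real_of_int ((2 * 31416 * F * 10000 * (q + t))^2) \<le> real_of_int (9 * q * M^2 * 10^8)"
    using check by (simp only: of_int_le_iff)
  then have "(2 * 31416 * f * 10000 * (qr + tr))^2 \<le> 9 * qr * (real_of_int M)^2 * 10^8"
    by (simp add: f_def qr_def tr_def)
  then have fact:
    "(2 * 31416 * f * 10000 * (qr + tr))^2 \<le> 9 * qr * (m * (10000 * (qr + tr)))^2 * 10^8"
    by (simp only: M)
  define P where "P = (10000 * (qr + tr))^2 * 10^8"
  have "(2 * (31416/10000) * f)^2 * P = (2 * 31416 * f * 10000 * (qr + tr))^2"
    by (simp add: P_def power2_eq_square algebra_simps)
  also note fact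
  also have "9 * qr * (m * (10000 * (qr + tr)))^2 * 10^8 = (9 * qr * m^2) * P"
    by (simp add: P_def power2_eq_square algebra_simps)
  finally have "(2 * (31416/10000) * f)^2 * P \<le> (9 * qr * m^2) * P" .
  moreover have "0 < P" using qr tr by (simp add: P_def)
  ultimately have "(2 * (31416/10000) * f)^2 \<le> 9 * qr * m^2" by (rule mult_right_le_imp_le)
  also have "\<dots> = (3 * sqrt qr * m)^2" using qr by (simp add: power_mult_distrib)
  finally have "(2 * (31416/10000) * f)^2 \<le> (3 * sqrt qr * m)^2" .
  then have "2 * (31416/10000) * f \<le> 3 * sqrt qr * m"
    by (rule power2_le_imp_le) (use m qr in simp)
  then have "f \<le> class_number_bound qr" using m qr by (intro le_class_number_bound) auto
  then show ?thesis by (simp add: f_def qr_def)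
qed

lemma int_form_count_bound:
  "0 \<le> X \<Longrightarrow> int (form_count_bound X)
     = hyperbola_3free_count X + hyperbola_3free_count (X div 4) + 2 * hyperbola_3free_count (X div 8)"
  by (simp add: form_count_bound_def int_card_odd_hyperbola_3free)

lemma form_count_bound_le_small:
  assumes X: "0 \<le> X" "X < 64" and P: "3 * X^2 \<le> 4 * P" "5 \<le> P"
  shows "real (form_count_bound X) \<le> class_number_bound (real_of_int P)"
proof -
  define q where "q = max 5 ((3 * X^2 + 3) div 4)"
  have "small_case_check X"
    using small_case_check_upto_63 X by (simp add: list_all_iff)
  then obtain k where "class_number_bound_certificate (int (form_count_bound X)) q k"
    unfolding small_case_check_def q_def by (auto simp: int_form_count_bound X(1))
  then have "real_of_int (int (form_count_bound X)) \<le> class_number_bound (real_of_int q)"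
    by (rule class_number_bound_certificate_sound[rotated 2]) (simp_all add: q_def)
  then have "real (form_count_bound X) \<le> class_number_bound (real_of_int q)" by simp
  also have "\<dots> \<le> class_number_bound (real_of_int P)"
  proof (rule class_number_bound_mono)
    have "(3 * X^2 + 3) div 4 \<le> (4 * P + 3) div 4" using P(1) by (intro zdiv_mono1) auto
    then have "q \<le> P" using P(2) by (simp add: q_def)
    then show "real_of_int q \<le> real_of_int P" by simp
  qed (simp add: q_def)
  finally show ?thesis .
qed

lemma form_count_bound_le_class_number_bound:
  assumes "0 \<le> X" "3 * X^2 \<le> 4 * P" "5 \<le> P"
  shows "real (form_count_bound X) \<le> class_number_bound (real_of_int P)"
proof (cases "64 \<le> X")
  case True
  have "real_of_int (3 * X^2) \<le> real_of_int (4 * P)" using assms(2) by (simp only: of_int_le_iff)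
  with True show ?thesis by (intro form_count_bound_le_large) simp_all
next
  case False
  with assms show ?thesis by (intro form_count_bound_le_small) simp_all
qed

lemma floor_sqrt_four_thirds:
  fixes P :: int
  defines "X \<equiv> \<lfloor>sqrt (4 * real_of_int P / 3)\<rfloor>"
  assumes P: "0 \<le> P"
  shows "0 \<le> X" and "3 * X^2 \<le> 4 * P" and "\<And>a. 3 * a^2 \<le> 4 * P \<Longrightarrow> a \<le> X"
proof -
  define r where "r = sqrt (4 * real_of_int P / 3)"
  have r: "0 \<le> r" "r^2 = 4 * real_of_int P / 3" using P by (simp_all add: r_def)
  show X: "0 \<le> X" using r by (simp add: X_def r_def[symmetric])
  have "real_of_int X \<le> r" by (simp add: X_def r_def[symmetric])
  then have "(real_of_int X)^2 \<le> r^2" using X by (intro power_mono) auto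
  with r(2) have "real_of_int (3 * X^2) \<le> real_of_int (4 * P)" by simp
  then show "3 * X^2 \<le> 4 * P" by (simp only: of_int_le_iff)
  fix a :: int assume "3 * a^2 \<le> 4 * P"
  then have "real_of_int (3 * a^2) \<le> real_of_int (4 * P)" by (simp only: of_int_le_iff)
  then have "(real_of_int a)^2 \<le> r^2" using r(2) by simp
  then have "real_of_int a \<le> r" using r(1) by (rule power2_le_imp_le)
  then show "a \<le> X" by (simp add: X_def r_def[symmetric] le_floor_iff)
qed

lemma less_if_three_square_le:
  fixes X P :: int
  assumes "2 \<le> P" "3 * X^2 \<le> 4 * P"
  shows "X < P"
proof (rule ccontr)
  assume "\<not> X < P"
  then have "P * P \<le> X * X" using assms(1) by (intro mult_mono) auto
  moreover have "3 * (X * X) \<le> 4 * P" using assms(2) by (simp add: power2_eq_square)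
  ultimately have "P * (3 * P) \<le> P * 4" by linarith
  with assms(1) show False by simp
qed

theorem corollary3p10:
  fixes p :: nat
  assumes "prime p" and "p \<ge> 5"
  shows "real (class_number (- 4 * int p))
           \<le> 3 * sqrt (real p) / (2 * pi) * (ln (real p) + 5 - 2 * ln 6)"
proof -
  define P where "P = int p"
  define X where "X = \<lfloor>sqrt (4 * real_of_int P / 3)\<rfloor>"
  have P: "prime P" "odd P" "5 \<le> P"
    using assms prime_odd_int[of P] by (auto simp: P_def prime_nat_int_transfer)
  have "0 \<le> P" using P(3) by simp
  note X = floor_sqrt_four_thirds[OF this, folded X_def]
  have X_P: "X < P" using P(3) X(2) by (intro less_if_three_square_le) simp_all
  have "class_number (-4 * P) \<le> (\<Sum>a\<in>{1..X}. card (centred_roots P a))"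
    using X(3) P(3) by (intro class_number_le_sum_centred_roots) simp
  also have "\<dots> \<le> form_count_bound X" using P(1,2) X_P by (rule sum_card_centred_roots_le)
  finally have "real (class_number (-4 * P)) \<le> real (form_count_bound X)" by simp
  also have "\<dots> \<le> class_number_bound (real_of_int P)"
    using X P(3) by (intro form_count_bound_le_class_number_bound) simp_all
  finally show ?thesis by (simp add: P_def class_number_bound_def)
qed

end
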